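(* For every finite multiset $\Delta$ and formulas $\varphi,\psi,\chi$: if $\Delta,\Box\varphi\to\psi\Rightarrow\chi$ has a proof of height $h$ in $\mathsf{G4iSLt}$, then $\Delta,\psi\Rightarrow\chi$ has a proof in $\mathsf{G4iSLt}$ of height at most $h$.
   Context: Formulas are built by the grammar $\varphi ::= p \mid \bot \mid \varphi\land\varphi \mid \varphi\lor\varphi \mid \varphi\to\varphi \mid \Box\varphi$, with $p$ ranging over a countably infinite set of propositional variables. For a multiset $\Gamma$, $\Box\Gamma=\{\Box\psi:\psi\in\Gamma\}$; a boxed formula is one of the form $\Box\psi$. A sequent is $\Gamma\Rightarrow\chi$ with $\Gamma$ a finite multiset of formulas and $\chi$ a formula. The sequent calculus $\mathsf{G4iSLt}$ has the following rules, where $p$ is a propositional variable and $\Phi$ always denotes a multiset containing no boxed formula: (⊥L) $\bot,\Gamma\Rightarrow\chi$ (no premise); (IdP) $\Gamma,p\Rightarrow p$ (no premise); (∧L) from $\Gamma,\varphi,\psi\Rightarrow\chi$ infer $\Gamma,\varphi\land\psi\Rightarrow\chi$; (∧R) from $\Gamma\Rightarrow\varphi$ and $\Gamma\Rightarrow\psi$ infer $\Gamma\Rightarrow\varphi\land\psi$; (∨L) from $\Gamma,\varphi\Rightarrow\chi$ and $\Gamma,\psi\Rightarrow\chi$ infer $\Gamma,\varphi\lor\psi\Rightarrow\chi$; (∨R$_i$), $i\in\{1,2\}$: from $\Gamma\Rightarrow\varphi_i$ infer $\Gamma\Rightarrow\varphi_1\lor\varphi_2$; (p→L) from $\Gamma,p,\varphi\Rightarrow\chi$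 infer $\Gamma,p,p\to\varphi\Rightarrow\chi$; (→R) from $\Gamma,\varphi\Rightarrow\psi$ infer $\Gamma\Rightarrow\varphi\to\psi$; (□→L) from $\Phi,\Gamma,\psi,\Box\varphi\Rightarrow\varphi$ and $\Phi,\Box\Gamma,\psi\Rightarrow\chi$ infer $\Phi,\Box\Gamma,\Box\varphi\to\psi\Rightarrow\chi$; (SLtR) from $\Phi,\Gamma,\Box\varphi\Rightarrow\varphi$ infer $\Phi,\Box\Gamma\Rightarrow\Box\varphi$; (∧→L) from $\Gamma,\varphi\to(\psi\to\chi)\Rightarrow\delta$ infer $\Gamma,(\varphi\land\psi)\to\chi\Rightarrow\delta$; (∨→L) from $\Gamma,\varphi\to\chi,\psi\to\chi\Rightarrow\delta$ infer $\Gamma,(\varphi\lor\psi)\to\chi\Rightarrow\delta$; (→→L) from $\Gamma,\psi\to\chi\Rightarrow\varphi\to\psi$ and $\Gamma,\chi\Rightarrow\delta$ infer $\Gamma,(\varphi\to\psi)\to\chi\Rightarrow\delta$. A proof of a sequent $S$ is a finite tree of sequents with root $S$ in which each interior node together with its children forms an instance of a rule (conclusion, premises) and each leaf is the conclusion of a premise-free rule; $S$ is provable if it has a proof. The height of a proof is the maximum number of nodes on a path from the root to a leaf. *)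

theory Defs
  imports Main "HOL-Library.Multiset"
begin

datatype form =
    Var nat
  | Bot
  | And form form
  | Or form form
  | Imp form form
  | Box form

definition boxed :: "form \<Rightarrow> bool" where
  "boxed A \<longleftrightarrow> (\<exists>B. A = Box B)"

definition boxfree :: "form multiset \<Rightarrow> bool" where
  "boxfree \<Phi> \<longleftrightarrow> (\<forall>A \<in># \<Phi>. \<not> boxed A)"

inductive g4proof :: "nat \<Rightarrow> form multiset \<Rightarrow> form \<Rightarrow> bool" where
  BotL: "g4proof 1 (add_mset Bot G) C"
| IdP: "g4proof 1 (add_mset (Var p) G) (Var p)"
| AndL: "g4proof n (add_mset A (add_mset B G)) C \<Longrightarrow> g4proof (Suc n) (add_mset (And A B) G) C"
| AndR: "g4proof n G A \<Longrightarrow> g4proof m G B \<Longrightarrow> g4proof (Suc (max n m)) G (And A B)"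
| OrL: "g4proof n (add_mset A G) C \<Longrightarrow> g4proof m (add_mset B G) C \<Longrightarrow>
          g4proof (Suc (max n m)) (add_mset (Or A B) G) C"
| OrR1: "g4proof n G A \<Longrightarrow> g4proof (Suc n) G (Or A B)"
| OrR2: "g4proof n G B \<Longrightarrow> g4proof (Suc n) G (Or A B)"
| VarImpL: "g4proof n (add_mset (Var p) (add_mset A G)) C \<Longrightarrow>
          g4proof (Suc n) (add_mset (Var p) (add_mset (Imp (Var p) A) G)) C"
| ImpR: "g4proof n (add_mset A G) B \<Longrightarrow> g4proof (Suc n) G (Imp A B)"
| BoxImpL: "boxfree \<Phi> \<Longrightarrow>
          g4proof n (\<Phi> + \<Gamma> + {#B, Box A#}) A \<Longrightarrow>
          g4proof m (\<Phi> + image_mset Box \<Gamma> + {#B#}) C \<Longrightarrow>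
          g4proof (Suc (max n m)) (\<Phi> + image_mset Box \<Gamma> + {#Imp (Box A) B#}) C"
| SLtR: "boxfree \<Phi> \<Longrightarrow>
          g4proof n (\<Phi> + \<Gamma> + {#Box A#}) A \<Longrightarrow>
          g4proof (Suc n) (\<Phi> + image_mset Box \<Gamma>) (Box A)"
| AndImpL: "g4proof n (add_mset (Imp A (Imp B C)) G) D \<Longrightarrow>
          g4proof (Suc n) (add_mset (Imp (And A B) C) G) D"
| OrImpL: "g4proof n (add_mset (Imp A C) (add_mset (Imp B C) G)) D \<Longrightarrow>
          g4proof (Suc n) (add_mset (Imp (Or A B) C) G) D"
| ImpImpL: "g4proof n (add_mset (Imp B C) G) (Imp A B) \<Longrightarrow>
          g4proof m (add_mset C G) D \<Longrightarrow>
          g4proof (Suc (max n m)) (add_mset (Imp (Imp A B) C) G) D"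

end

theory Submission
  imports Defs
begin

text \<open>
  The formula \<open>\<box>\<phi> \<rightarrow> \<psi>\<close> is never principal in a propositional rule, so
  those rules simply carry the replacement of \<open>\<box>\<phi> \<rightarrow> \<psi>\<close> by \<open>\<psi>\<close> up from
  their premises. In the modal rules the left premise sees the context with one box
  stripped from every boxed formula. After the replacement, \<open>\<psi>\<close> may itself be
  boxed, \<open>\<psi> = \<box>\<psi>'\<close>, and then the left premise must contain \<open>\<psi>'\<close> where the
  induction hypothesis delivers \<open>\<box>\<psi>'\<close>. This is repaired by the height-preserving
  admissibility of replacing an antecedent \<open>\<box>A\<close> by \<open>A\<close>, proved by the same
  induction scheme; there, stripping a box from \<open>\<box>\<box>A'\<close> leads to the same
  situation one level down, which the induction hypothesis covers.
\<close>

text \<open>\<open>image_mset debox\<close> maps the context \<open>\<Phi>, \<box>\<Gamma>\<close> of the conclusion of a modal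
  rule to the context \<open>\<Phi>, \<Gamma>\<close> of its left premise.\<close>

fun debox :: "form \<Rightarrow> form" where
  "debox (Box A) = A"
| "debox A = A"

lemma debox_nonboxed: "\<not> boxed A \<Longrightarrow> debox A = A"
  by (cases A) (auto simp: boxed_def)

lemma image_debox_boxfree: "boxfree \<Phi> \<Longrightarrow> image_mset debox \<Phi> = \<Phi>"
  by (simp add: boxfree_def debox_nonboxed multiset.map_ident_strong)

lemma image_debox_split:
  "boxfree \<Phi> \<Longrightarrow> image_mset debox (\<Phi> + image_mset Box \<Gamma>) = \<Phi> + \<Gamma>"
  by (simp add: image_debox_boxfree multiset.map_comp comp_def)

lemma boxfree_decomposition: "\<exists>\<Phi> \<Gamma>. boxfree \<Phi> \<and> G = \<Phi> + image_mset Box \<Gamma>"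
proof (intro exI conjI)
  show "boxfree (filter_mset (\<lambda>A. \<not> boxed A) G)" by (simp add: boxfree_def)
  have "image_mset Box (image_mset debox (filter_mset boxed G)) = filter_mset boxed G"
    unfolding multiset.map_comp comp_def by (rule multiset.map_ident_strong) (auto simp: boxed_def)
  then show "G = filter_mset (\<lambda>A. \<not> boxed A) G
      + image_mset Box (image_mset debox (filter_mset boxed G))"
    using multiset_partition[of G boxed] by (metis add.commute)
qed

lemma g4proof_BoxImpL_debox:
  assumes "g4proof n (image_mset debox G + {#B, Box A#}) A" and "g4proof m (G + {#B#}) C"
  shows "g4proof (Suc (max n m)) (G + {#Imp (Box A) B#}) C"
proof -
  obtain \<Phi> \<Gamma> where \<Phi>: "boxfree \<Phi>" and G: "G = \<Phi> + image_mset Box \<Gamma>"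
    using boxfree_decomposition by blast
  from assms(1) have "g4proof n (\<Phi> + \<Gamma> + {#B, Box A#}) A"
    unfolding G image_debox_split[OF \<Phi>] .
  from g4proof.BoxImpL[OF \<Phi> this assms(2)[unfolded G]] show ?thesis unfolding G .
qed

lemma g4proof_SLtR_debox:
  assumes "g4proof n (image_mset debox G + {#Box A#}) A"
  shows "g4proof (Suc n) G (Box A)"
proof -
  obtain \<Phi> \<Gamma> where \<Phi>: "boxfree \<Phi>" and G: "G = \<Phi> + image_mset Box \<Gamma>"
    using boxfree_decomposition by blast
  from assms have "g4proof n (\<Phi> + \<Gamma> + {#Box A#}) A"
    unfolding G image_debox_split[OF \<Phi>] .
  from g4proof.SLtR[OF \<Phi> this] show ?thesis unfolding G .
qed

definition modal :: "form \<Rightarrow> bool" where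
  "modal A \<longleftrightarrow> boxed A \<or> (\<exists>B C. A = Imp (Box B) C)"

definition replaceable ::
    "(form \<Rightarrow> form \<Rightarrow> bool) \<Rightarrow> nat \<Rightarrow> form multiset \<Rightarrow> form \<Rightarrow> bool" where
  "replaceable R n G C \<longleftrightarrow>
     (\<forall>X Y D. R X Y \<longrightarrow> G = add_mset X D \<longrightarrow> (\<exists>k\<le>n. g4proof k (add_mset Y D) C))"

lemma replaceableD:
  assumes "replaceable R n G C" and "R X Y" and "G = add_mset X D"
  shows "\<exists>k\<le>n. g4proof k (add_mset Y D) C"
  using assms unfolding replaceable_def by blast

lemma side_formula_split:
  assumes "\<Pi> + G = add_mset X D" and "X \<notin># \<Pi>"
  obtains E where "G = add_mset X E" and "D = \<Pi> + E"
proof -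
  have "X \<in># G" using assms by (metis union_iff union_single_eq_member)
  then obtain E where G: "G = add_mset X E" by (metis multi_member_split)
  with assms(1) have "D = \<Pi> + E" by simp
  with G show thesis by (rule that)
qed

lemma replaceable_rule0:
  assumes "\<And>X Y. R X Y \<Longrightarrow> X \<notin># \<Pi>" and "\<And>E. g4proof 1 (\<Pi> + E) C"
  shows "replaceable R 1 (\<Pi> + G) C"
  unfolding replaceable_def
proof (intro allI impI)
  fix X Y D assume "R X Y" and "\<Pi> + G = add_mset X D"
  then obtain E where "D = \<Pi> + E" using assms(1) side_formula_split by metis
  then show "\<exists>k\<le>1. g4proof k (add_mset Y D) C"
    using assms(2)[of "add_mset Y E"] by auto
qed

lemma replaceable_rule1:
  assumes "\<And>X Y. R X Y \<Longrightarrow> X \<notin># \<Pi>"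
    and "replaceable R n (S + G) C'"
    and "\<And>E k. g4proof k (S + E) C' \<Longrightarrow> g4proof (Suc k) (\<Pi> + E) C"
  shows "replaceable R (Suc n) (\<Pi> + G) C"
  unfolding replaceable_def
proof (intro allI impI)
  fix X Y D assume "R X Y" and "\<Pi> + G = add_mset X D"
  then obtain E where G: "G = add_mset X E" and D: "D = \<Pi> + E"
    using assms(1) side_formula_split by metis
  from replaceableD[OF assms(2) \<open>R X Y\<close>, of "S + E"] obtain k
    where "k \<le> n" and "g4proof k (S + add_mset Y E) C'"
    unfolding G by auto
  with assms(3) show "\<exists>k\<le>Suc n. g4proof k (add_mset Y D) C"
    unfolding D by fastforce
qed

lemma replaceable_rule2:
  assumes "\<And>X Y. R X Y \<Longrightarrow> X \<notin># \<Pi>"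
    and "replaceable R n (S + G) C'" and "replaceable R m (S' + G) C''"
    and "\<And>E k k'. g4proof k (S + E) C' \<Longrightarrow> g4proof k' (S' + E) C'' \<Longrightarrow>
           g4proof (Suc (max k k')) (\<Pi> + E) C"
  shows "replaceable R (Suc (max n m)) (\<Pi> + G) C"
  unfolding replaceable_def
proof (intro allI impI)
  fix X Y D assume "R X Y" and "\<Pi> + G = add_mset X D"
  then obtain E where G: "G = add_mset X E" and D: "D = \<Pi> + E"
    using assms(1) side_formula_split by metis
  from replaceableD[OF assms(2) \<open>R X Y\<close>, of "S + E"] obtain k
    where "k \<le> n" and "g4proof k (S + add_mset Y E) C'"
    unfolding G by auto
  moreover from replaceableD[OF assms(3) \<open>R X Y\<close>, of "S' + E"] obtain k'
    where "k' \<le> m" and "g4proof k' (S' + add_mset Y E) C''"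
    unfolding G by auto
  ultimately have "g4proof (Suc (max k k')) (add_mset Y D) C"
    using assms(4)[of k "add_mset Y E" k'] unfolding D by simp
  moreover have "Suc (max k k') \<le> Suc (max n m)" using \<open>k \<le> n\<close> \<open>k' \<le> m\<close> by linarith
  ultimately show "\<exists>k\<le>Suc (max n m). g4proof k (add_mset Y D) C" by blast
qed

lemma g4proof_replaceable:
  assumes modal: "\<And>X Y. R X Y \<Longrightarrow> modal X"
    and BoxImpL_case: "\<And>G n m A B C.
      g4proof n (image_mset debox G + {#B, Box A#}) A \<Longrightarrow>
      replaceable R n (image_mset debox G + {#B, Box A#}) A \<Longrightarrow>
      g4proof m (G + {#B#}) C \<Longrightarrow> replaceable R m (G + {#B#}) C \<Longrightarrow>
      replaceable R (Suc (max n m)) (G + {#Imp (Box A) B#}) C"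
    and SLtR_case: "\<And>G n A.
      g4proof n (image_mset debox G + {#Box A#}) A \<Longrightarrow>
      replaceable R n (image_mset debox G + {#Box A#}) A \<Longrightarrow>
      replaceable R (Suc n) G (Box A)"
    and "g4proof h G C"
  shows "replaceable R h G C"
  using \<open>g4proof h G C\<close>
proof (induction rule: g4proof.induct)
  case (BotL G C)
  have "replaceable R 1 ({#Bot#} + G) C"
    by (rule replaceable_rule0)
      (auto dest: modal simp: modal_def boxed_def intro: g4proof.BotL[simplified])
  then show ?case by simp
next
  case (IdP p G)
  have "replaceable R 1 ({#Var p#} + G) (Var p)"
    by (rule replaceable_rule0)
      (auto dest: modal simp: modal_def boxed_def intro: g4proof.IdP[simplified])
  then show ?case by simp
next
  case (AndL n A B G C)
  have "replaceable R (Suc n) ({#And A B#} + G) C"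
    by (rule replaceable_rule1[where S = "{#A, B#}"])
      (use AndL.IH in \<open>auto dest: modal simp: modal_def boxed_def g4proof.AndL\<close>)
  then show ?case by simp
next
  case (AndR n G A m B)
  have "replaceable R (Suc (max n m)) ({#} + G) (And A B)"
    by (rule replaceable_rule2[where S = "{#}" and S' = "{#}"])
      (use AndR.IH in \<open>auto simp: g4proof.AndR\<close>)
  then show ?case by simp
next
  case (OrL n A G C m B)
  have "replaceable R (Suc (max n m)) ({#Or A B#} + G) C"
    by (rule replaceable_rule2[where S = "{#A#}" and S' = "{#B#}"])
      (use OrL.IH in \<open>auto dest: modal simp: modal_def boxed_def g4proof.OrL\<close>)
  then show ?case by simp
next
  case (OrR1 n G A B)
  have "replaceable R (Suc n) ({#} + G) (Or A B)"
    by (rule replaceable_rule1[where S = "{#}"])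
      (use OrR1.IH in \<open>auto simp: g4proof.OrR1\<close>)
  then show ?case by simp
next
  case (OrR2 n G B A)
  have "replaceable R (Suc n) ({#} + G) (Or A B)"
    by (rule replaceable_rule1[where S = "{#}"])
      (use OrR2.IH in \<open>auto simp: g4proof.OrR2\<close>)
  then show ?case by simp
next
  case (VarImpL n p A G C)
  have "replaceable R (Suc n) ({#Var p, Imp (Var p) A#} + G) C"
    by (rule replaceable_rule1[where S = "{#Var p, A#}"])
      (use VarImpL.IH in \<open>auto dest: modal simp: modal_def boxed_def g4proof.VarImpL\<close>)
  then show ?case by simp
next
  case (ImpR n A G B)
  have "replaceable R (Suc n) ({#} + G) (Imp A B)"
    by (rule replaceable_rule1[where S = "{#A#}"])
      (use ImpR.IH in \<open>auto simp: g4proof.ImpR\<close>)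
  then show ?case by simp
next
  case (BoxImpL \<Phi> n \<Gamma> B A m C)
  with BoxImpL_case[of n "\<Phi> + image_mset Box \<Gamma>" B A m C] show ?case
    unfolding image_debox_split[OF \<open>boxfree \<Phi>\<close>] by blast
next
  case (SLtR \<Phi> n \<Gamma> A)
  with SLtR_case[of n "\<Phi> + image_mset Box \<Gamma>" A] show ?case
    unfolding image_debox_split[OF \<open>boxfree \<Phi>\<close>] by blast
next
  case (AndImpL n A B C G D)
  have "replaceable R (Suc n) ({#Imp (And A B) C#} + G) D"
    by (rule replaceable_rule1[where S = "{#Imp A (Imp B C)#}"])
      (use AndImpL.IH in \<open>auto dest: modal simp: modal_def boxed_def g4proof.AndImpL\<close>)
  then show ?case by simp
next
  case (OrImpL n A C B G D)
  have "replaceable R (Suc n) ({#Imp (Or A B) C#} + G) D"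
    by (rule replaceable_rule1[where S = "{#Imp A C, Imp B C#}"])
      (use OrImpL.IH in \<open>auto dest: modal simp: modal_def boxed_def g4proof.OrImpL\<close>)
  then show ?case by simp
next
  case (ImpImpL n B C G A m D)
  have "replaceable R (Suc (max n m)) ({#Imp (Imp A B) C#} + G) D"
    by (rule replaceable_rule2[where S = "{#Imp B C#}" and S' = "{#C#}"])
      (use ImpImpL.IH in \<open>auto dest: modal simp: modal_def boxed_def g4proof.ImpImpL\<close>)
  then show ?case by simp
qed

lemma debox_antecedent:
  assumes "g4proof n G C" and "replaceable (\<lambda>X Y. X = Box Y) n G C" and "G = add_mset A D"
  shows "\<exists>k\<le>n. g4proof k (add_mset (debox A) D) C"
proof (cases "boxed A")
  case True
  then obtain A' where "A = Box A'" by (auto simp: boxed_def)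
  with assms(2,3) show ?thesis by (auto simp: replaceable_def)
next
  case False
  with assms(1,3) show ?thesis by (auto simp: debox_nonboxed)
qed

lemma replaceable_Box_BoxImpL:
  assumes p1: "g4proof n (image_mset debox G + {#B, Box A#}) A"
    and r1: "replaceable (\<lambda>X Y. X = Box Y) n (image_mset debox G + {#B, Box A#}) A"
    and r2: "replaceable (\<lambda>X Y. X = Box Y) m (G + {#B#}) C"
  shows "replaceable (\<lambda>X Y. X = Box Y) (Suc (max n m)) (G + {#Imp (Box A) B#}) C"
  unfolding replaceable_def
proof (intro allI impI)
  fix X Y D assume "X = Box Y" and "G + {#Imp (Box A) B#} = add_mset X D"
  then obtain G' where G: "G = add_mset (Box Y) G'" and D: "D = add_mset (Imp (Box A) B) G'"
    using side_formula_split[of "{#Imp (Box A) B#}" G X D] by (auto simp: add.commute)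
  from replaceableD[OF r2, of "Box Y" Y "add_mset B G'"] obtain k2
    where "k2 \<le> m" and k2: "g4proof k2 (add_mset Y G' + {#B#}) C"
    unfolding G by (auto simp: add_mset_commute)
  from debox_antecedent[OF p1 r1, of Y "image_mset debox G' + {#B, Box A#}"] obtain k1
    where "k1 \<le> n" and "g4proof k1 (add_mset (debox Y) (image_mset debox G' + {#B, Box A#})) A"
    unfolding G by auto
  then have "g4proof k1 (image_mset debox (add_mset Y G') + {#B, Box A#}) A"
    by (simp add: add_mset_commute)
  from g4proof_BoxImpL_debox[OF this k2] \<open>k1 \<le> n\<close> \<open>k2 \<le> m\<close>
  show "\<exists>k\<le>Suc (max n m). g4proof k (add_mset Y D) C"
    unfolding D by (auto intro!: exI[of _ "Suc (max k1 k2)"] simp: add_mset_commute)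
qed

lemma replaceable_Box_SLtR:
  assumes p: "g4proof n (image_mset debox G + {#Box A#}) A"
    and r: "replaceable (\<lambda>X Y. X = Box Y) n (image_mset debox G + {#Box A#}) A"
  shows "replaceable (\<lambda>X Y. X = Box Y) (Suc n) G (Box A)"
  unfolding replaceable_def
proof (intro allI impI)
  fix X Y D assume "X = Box Y" and G: "G = add_mset X D"
  from debox_antecedent[OF p r, of Y "image_mset debox D + {#Box A#}"] obtain k
    where "k \<le> n" and "g4proof k (add_mset (debox Y) (image_mset debox D + {#Box A#})) A"
    unfolding G \<open>X = Box Y\<close> by auto
  then have "g4proof k (image_mset debox (add_mset Y D) + {#Box A#}) A"
    by (simp add: add_mset_commute)
  from g4proof_SLtR_debox[OF this] \<open>k \<le> n\<close>
  show "\<exists>k\<le>Suc n. g4proof k (add_mset Y D) (Box A)" by auto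
qed

lemma replaceable_Box:
  assumes "g4proof h G C"
  shows "replaceable (\<lambda>X Y. X = Box Y) h G C"
proof (rule g4proof_replaceable)
  show "modal X" if "X = Box Y" for X Y using that by (simp add: modal_def boxed_def)
qed (blast intro: assms replaceable_Box_BoxImpL replaceable_Box_SLtR)+

lemma g4proof_debox_antecedent:
  assumes "g4proof n (add_mset A D) C"
  shows "\<exists>k\<le>n. g4proof k (add_mset (debox A) D) C"
  using debox_antecedent[OF assms replaceable_Box[OF assms]] by simp

lemma replaceable_Imp_Box_BoxImpL:
  assumes r1: "replaceable (\<lambda>X Y. \<exists>F. X = Imp (Box F) Y) n
      (image_mset debox G + {#B, Box A#}) A"
    and p2: "g4proof m (G + {#B#}) C"
    and r2: "replaceable (\<lambda>X Y. \<exists>F. X = Imp (Box F) Y) m (G + {#B#}) C"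
  shows "replaceable (\<lambda>X Y. \<exists>F. X = Imp (Box F) Y) (Suc (max n m))
      (G + {#Imp (Box A) B#}) C"
  unfolding replaceable_def
proof (intro allI impI)
  fix X Y D assume R: "\<exists>F. X = Imp (Box F) Y" and eq: "G + {#Imp (Box A) B#} = add_mset X D"
  show "\<exists>k\<le>Suc (max n m). g4proof k (add_mset Y D) C"
  proof (cases "X = Imp (Box A) B")
    case True
    with eq R have "D = G" and "Y = B" by auto
    with p2 show ?thesis by (auto intro!: exI[of _ m])
  next
    case False
    with eq obtain G' where G: "G = add_mset X G'" and D: "D = add_mset (Imp (Box A) B) G'"
      using side_formula_split[of "{#Imp (Box A) B#}" G X D] by (auto simp: add.commute)
    from replaceableD[OF r1 R, of "image_mset debox G' + {#B, Box A#}"] R obtain k1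
      where "k1 \<le> n" and "g4proof k1 (add_mset Y (image_mset debox G' + {#B, Box A#})) A"
      unfolding G by (auto simp: add_mset_commute)
    with g4proof_debox_antecedent obtain j where "j \<le> n"
      and "g4proof j (add_mset (debox Y) (image_mset debox G' + {#B, Box A#})) A"
      by (meson order_trans)
    then have p1: "g4proof j (image_mset debox (add_mset Y G') + {#B, Box A#}) A"
      by (simp add: add_mset_commute)
    from replaceableD[OF r2 R, of "add_mset B G'"] obtain k2
      where "k2 \<le> m" and k2: "g4proof k2 (add_mset Y G' + {#B#}) C"
      unfolding G by (auto simp: add_mset_commute)
    from g4proof_BoxImpL_debox[OF p1 k2] \<open>j \<le> n\<close> \<open>k2 \<le> m\<close> show ?thesis
      unfolding D by (auto intro!: exI[of _ "Suc (max j k2)"] simp: add_mset_commute)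
  qed
qed

lemma replaceable_Imp_Box_SLtR:
  assumes r: "replaceable (\<lambda>X Y. \<exists>F. X = Imp (Box F) Y) n
      (image_mset debox G + {#Box A#}) A"
  shows "replaceable (\<lambda>X Y. \<exists>F. X = Imp (Box F) Y) (Suc n) G (Box A)"
  unfolding replaceable_def
proof (intro allI impI)
  fix X Y D assume R: "\<exists>F. X = Imp (Box F) Y" and G: "G = add_mset X D"
  from replaceableD[OF r R, of "image_mset debox D + {#Box A#}"] R obtain k
    where "k \<le> n" and "g4proof k (add_mset Y (image_mset debox D + {#Box A#})) A"
    unfolding G by auto
  with g4proof_debox_antecedent obtain j where "j \<le> n"
    and "g4proof j (add_mset (debox Y) (image_mset debox D + {#Box A#})) A"
    by (meson order_trans)
  then have "g4proof j (image_mset debox (add_mset Y D) + {#Box A#}) A"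
    by (simp add: add_mset_commute)
  from g4proof_SLtR_debox[OF this] \<open>j \<le> n\<close>
  show "\<exists>k\<le>Suc n. g4proof k (add_mset Y D) (Box A)" by auto
qed

lemma replaceable_Imp_Box:
  assumes "g4proof h G C"
  shows "replaceable (\<lambda>X Y. \<exists>F. X = Imp (Box F) Y) h G C"
proof (rule g4proof_replaceable)
  show "modal X" if "\<exists>F. X = Imp (Box F) Y" for X Y using that by (auto simp: modal_def)
qed (blast intro: assms replaceable_Imp_Box_BoxImpL replaceable_Imp_Box_SLtR)+

theorem mainTheorem8:
  fixes \<Delta> :: "form multiset" and \<phi> \<psi> \<chi> :: form and h :: nat
  assumes "g4proof h (add_mset (Imp (Box \<phi>) \<psi>) \<Delta>) \<chi>"
  shows "\<exists>k\<le>h. g4proof k (add_mset \<psi> \<Delta>) \<chi>"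
  using replaceableD[OF replaceable_Imp_Box[OF assms]] by blast

end
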